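(* Let $P$ and $Q$ be rearrangement invariant spaces of complex valued functions on $\mathbb R^n$, let $U$ and $V$ be strictly positive measurable functions on $\mathbb R^n$, and let $C>0$. Suppose that whenever $f$ is integrable and $Uf\in P$, we have $V\widehat f\in Q'$ and \[ \|V\widehat f\|_{Q'}\le C\|Uf\|_P. \] Then for every integrable $g$ with $g/V\in Q$, we have $\widehat g/U\in P'$ and \[ \|\widehat g/U\|_{P'}\le C\|g/V\|_Q. \]
   Context: The Fourier transform of an integrable $f\colon\mathbb R^n\to\mathbb C$ is $\widehat f(x)=\int_{\mathbb R^n}e^{-2\pi i x\cdot t}f(t)\,dt$. A rearrangement invariant space $X$ (Bennett–Sharpley) is defined by a norm $\rho$ on non-negative measurable functions on $\mathbb R^n$ such that: $\rho(f)=0$ iff $f=0$ a.e., $\rho(af)=a\rho(f)$ for $a\ge0$, $\rho(f+g)\le\rho(f)+\rho(g)$; $0\le g\le f$ a.e. implies $\rho(g)\le\rho(f)$; $0\le f_k\uparrow f$ a.e. implies $\rho(f_k)\uparrow\rho(f)$; $\rho(\chi_E)<\infty$ for every set $E$ of finite measure; for every $E$ of finite measure there is $C_E$ with $\int_E f\le C_E\rho(f)$; and $\rho(f)=\rho(g)$ whenever $f,g$ are equimeasurable. Then $X=\{f \text{ measurable}:\|f\|_X:=\rho(|f|)<\infty\}$. The associate space $X'$ is the set of measurable $g$ with $\|g\|_{X'}=\sup\{\int_{\mathbb R^n}|fg|:\|f\|_X\le1\}<\infty$. *)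

theory Defs
  imports "HOL-Analysis.Analysis"
begin

definition fourier :: "('a::euclidean_space \<Rightarrow> complex) \<Rightarrow> 'a \<Rightarrow> complex" where
  "fourier f x = (LINT t|lebesgue. cis (- 2 * pi * (x \<bullet> t)) * f t)"

text \<open>A rearrangement invariant (Banach function) norm in the sense of Bennett--Sharpley,
  acting on non-negative (extended-valued) Lebesgue measurable functions.\<close>
definition ri_norm :: "(('a::euclidean_space \<Rightarrow> ennreal) \<Rightarrow> ennreal) \<Rightarrow> bool" where
  "ri_norm \<rho> \<longleftrightarrow>
    (\<forall>f \<in> borel_measurable lebesgue. \<rho> f = 0 \<longleftrightarrow> (AE x in lebesgue. f x = 0)) \<and>
    (\<forall>f \<in> borel_measurable lebesgue. \<forall>a::real. a \<ge> 0 \<longrightarrow>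
        \<rho> (\<lambda>x. ennreal a * f x) = ennreal a * \<rho> f) \<and>
    (\<forall>f \<in> borel_measurable lebesgue. \<forall>g \<in> borel_measurable lebesgue.
        \<rho> (\<lambda>x. f x + g x) \<le> \<rho> f + \<rho> g) \<and>
    (\<forall>f \<in> borel_measurable lebesgue. \<forall>g \<in> borel_measurable lebesgue.
        (AE x in lebesgue. g x \<le> f x) \<longrightarrow> \<rho> g \<le> \<rho> f) \<and>
    (\<forall>F f. (\<forall>k. F k \<in> borel_measurable lebesgue) \<longrightarrow> f \<in> borel_measurable lebesgue \<longrightarrow>
        (AE x in lebesgue. incseq (\<lambda>k. F k x) \<and> (\<lambda>k. F k x) \<longlonglongrightarrow> f x) \<longrightarrow>
        incseq (\<lambda>k. \<rho> (F k)) \<and> (\<lambda>k. \<rho> (F k)) \<longlonglongrightarrow> \<rho> f) \<and>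
    (\<forall>E \<in> sets lebesgue. emeasure lebesgue E < \<infinity> \<longrightarrow> \<rho> (indicator E) < \<infinity>) \<and>
    (\<forall>E \<in> sets lebesgue. emeasure lebesgue E < \<infinity> \<longrightarrow>
        (\<exists>C::real. \<forall>f \<in> borel_measurable lebesgue.
            set_nn_integral lebesgue E f \<le> ennreal C * \<rho> f)) \<and>
    (\<forall>f \<in> borel_measurable lebesgue. \<forall>g \<in> borel_measurable lebesgue.
        (\<forall>s::real. s \<ge> 0 \<longrightarrow>
           emeasure lebesgue {x. ennreal s < f x} = emeasure lebesgue {x. ennreal s < g x})
        \<longrightarrow> \<rho> f = \<rho> g)"

definition ri_fnorm :: "(('a::euclidean_space \<Rightarrow> ennreal) \<Rightarrow> ennreal) \<Rightarrow> ('a \<Rightarrow> complex) \<Rightarrow> ennreal" where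
  "ri_fnorm \<rho> f = \<rho> (\<lambda>x. ennreal (cmod (f x)))"

definition ri_space :: "(('a::euclidean_space \<Rightarrow> ennreal) \<Rightarrow> ennreal) \<Rightarrow> ('a \<Rightarrow> complex) set" where
  "ri_space \<rho> = {f \<in> borel_measurable lebesgue. ri_fnorm \<rho> f < \<infinity>}"

definition assoc_norm :: "(('a::euclidean_space \<Rightarrow> ennreal) \<Rightarrow> ennreal) \<Rightarrow> ('a \<Rightarrow> complex) \<Rightarrow> ennreal" where
  "assoc_norm \<rho> g = (SUP f \<in> {f \<in> borel_measurable lebesgue. ri_fnorm \<rho> f \<le> 1}.
       \<integral>\<^sup>+ x. ennreal (cmod (f x * g x)) \<partial>lebesgue)"

definition assoc_space :: "(('a::euclidean_space \<Rightarrow> ennreal) \<Rightarrow> ennreal) \<Rightarrow> ('a \<Rightarrow> complex) set" where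
  "assoc_space \<rho> = {g \<in> borel_measurable lebesgue. assoc_norm \<rho> g < \<infinity>}"

end

theory Submission
  imports Defs
begin

text \<open>Duality. Let \<open>h\<close> lie in the unit ball of \<open>P\<close> and let \<open>E\<close> be a bounded set on which \<open>|h| / U\<close>
  and \<open>fourier g\<close> are bounded. The test function \<open>f = 1\<^sub>E |h| / U \<cdot> cnj (sgn (fourier g))\<close> is
  integrable with \<open>\<parallel>U f\<parallel>\<^sub>P \<le> 1\<close>, and \<open>f \<cdot> fourier g = 1\<^sub>E |h \<cdot> fourier g / U| \<ge> 0\<close>. By the
  multiplication formula \<open>\<integral> f \<cdot> fourier g = \<integral> g \<cdot> fourier f\<close>, Hoelder's inequality for \<open>Q\<close> and \<open>Q'\<close>,
  and the hypothesis, \<open>\<integral>\<^sub>E |h \<cdot> fourier g / U| \<le> \<parallel>g / V\<parallel>\<^sub>Q \<parallel>V \<cdot> fourier f\<parallel>\<^sub>Q\<^sub>' \<le> C \<parallel>g / V\<parallel>\<^sub>Q\<close>.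
  Monotone convergence over an exhausting sequence of such \<open>E\<close> bounds the associate norm of
  \<open>fourier g / U\<close>.\<close>

lemma sigma_finite_measure_completion:
  assumes "sigma_finite_measure M"
  shows "sigma_finite_measure (completion M)"
proof -
  interpret sigma_finite_measure M by fact
  obtain A where "countable A" "A \<subseteq> sets M" "\<Union>A = space M" "\<forall>a\<in>A. emeasure M a \<noteq> \<infinity>"
    using sigma_finite_countable by blast
  then show ?thesis
    by unfold_locales (auto intro!: exI[of _ A] simp: emeasure_completion)
qed

lemma sigma_finite_lebesgue: "sigma_finite_measure (lebesgue :: 'a::euclidean_space measure)"
  by (rule sigma_finite_measure_completion[OF sigma_finite_lborel])

lemma borel_measurable_lebesgue_id [measurable]:
  "(\<lambda>x. x) \<in> borel_measurable (lebesgue :: 'a::euclidean_space measure)"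
  by (simp add: measurable_completion)

lemma borel_measurable_cis [measurable]: "cis \<in> borel_measurable borel"
  by (intro borel_measurable_continuous_onI continuous_intros)

lemma borel_measurable_cnj [measurable]: "cnj \<in> borel_measurable borel"
  by (intro borel_measurable_continuous_onI continuous_intros)

lemma borel_measurable_fourier_kernel [measurable]:
  fixes g :: "'a::euclidean_space \<Rightarrow> complex"
  assumes [measurable]: "g \<in> borel_measurable lebesgue"
  shows "(\<lambda>(x, t). cis (- 2 * pi * (x \<bullet> t)) * g t) \<in> borel_measurable (lebesgue \<Otimes>\<^sub>M lebesgue)"
  by measurable

lemma borel_measurable_fourier [measurable]:
  fixes g :: "'a::euclidean_space \<Rightarrow> complex"
  assumes "g \<in> borel_measurable lebesgue"
  shows "fourier g \<in> borel_measurable lebesgue"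
  using sigma_finite_measure.borel_measurable_lebesgue_integral
      [OF sigma_finite_lebesgue borel_measurable_fourier_kernel[OF assms]]
  by (simp add: fourier_def[abs_def])

lemma fourier_multiplication_formula:
  fixes f g :: "'a::euclidean_space \<Rightarrow> complex"
  assumes f: "integrable lebesgue f" and g: "integrable lebesgue g"
  shows "integrable lebesgue (\<lambda>x. f x * fourier g x)"
    and "(\<integral>x. f x * fourier g x \<partial>lebesgue) = (\<integral>t. g t * fourier f t \<partial>lebesgue)"
proof -
  interpret pair_sigma_finite "lebesgue :: 'a measure" lebesgue
    by (simp add: pair_sigma_finite_def sigma_finite_lebesgue)
  have [measurable]: "f \<in> borel_measurable lebesgue" "g \<in> borel_measurable lebesgue"
    using f g by auto
  define F where "F x t = f x * (cis (- 2 * pi * (x \<bullet> t)) * g t)" for x t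
  have F_measurable: "case_prod F \<in> borel_measurable (lebesgue \<Otimes>\<^sub>M lebesgue)"
    unfolding F_def by measurable
  have "integrable lebesgue (\<lambda>t. cis (- 2 * pi * (x \<bullet> t)) * g t)" for x
    by (rule Bochner_Integration.integrable_bound[OF g]) (auto simp: norm_mult)
  then have F_integrable: "integrable (lebesgue \<Otimes>\<^sub>M lebesgue) (case_prod F)"
    by (intro Fubini_integrable F_measurable) (auto simp: F_def norm_mult f g integrable_norm)
  have "(\<integral>t. F x t \<partial>lebesgue) = f x * fourier g x" for x
    by (simp add: F_def fourier_def)
  moreover have "(\<integral>x. F x t \<partial>lebesgue) = g t * fourier f t" for t
  proof -
    have "F x t = g t * (cis (- 2 * pi * (t \<bullet> x)) * f x)" for x
      by (simp add: F_def inner_commute ac_simps)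
    then show ?thesis
      by (simp add: fourier_def)
  qed
  ultimately show "integrable lebesgue (\<lambda>x. f x * fourier g x)"
    and "(\<integral>x. f x * fourier g x \<partial>lebesgue) = (\<integral>t. g t * fourier f t \<partial>lebesgue)"
    using integrable_fst[OF F_integrable] Fubini_integral[OF F_integrable] by simp_all
qed

lemma cnj_sgn_mult: "cnj (sgn z) * z = complex_of_real (cmod z)"
proof (cases "z = 0")
  case False
  have "cnj (sgn z) * z = cnj z * z / complex_of_real (cmod z)"
    by (simp add: sgn_div_norm scaleR_conv_of_real divide_inverse ac_simps)
  also have "\<dots> = complex_of_real (cmod z)"
    using False by (simp add: complex_norm_square[symmetric] mult.commute power2_eq_square)
  finally show ?thesis .
qed simp

lemma ri_fnorm_mono:
  assumes "ri_norm \<rho>" "\<phi> \<in> borel_measurable lebesgue" "\<psi> \<in> borel_measurable lebesgue"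
    and "\<And>x. cmod (\<phi> x) \<le> cmod (\<psi> x)"
  shows "ri_fnorm \<rho> \<phi> \<le> ri_fnorm \<rho> \<psi>"
  using assms unfolding ri_norm_def ri_fnorm_def by (auto intro!: ennreal_leI)

lemma ri_fnorm_eq_0_iff:
  assumes "ri_norm \<rho>" "\<phi> \<in> borel_measurable lebesgue"
  shows "ri_fnorm \<rho> \<phi> = 0 \<longleftrightarrow> (AE x in lebesgue. \<phi> x = 0)"
  using assms unfolding ri_norm_def ri_fnorm_def by auto

lemma ri_fnorm_of_real_mult:
  assumes "ri_norm \<rho>" "\<phi> \<in> borel_measurable lebesgue" "c \<ge> 0"
  shows "ri_fnorm \<rho> (\<lambda>x. complex_of_real c * \<phi> x) = ennreal c * ri_fnorm \<rho> \<phi>"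
proof -
  have "ennreal (cmod (complex_of_real c * \<phi> x)) = ennreal c * ennreal (cmod (\<phi> x))" for x
    using \<open>c \<ge> 0\<close> by (simp add: norm_mult ennreal_mult)
  then show ?thesis
    using assms unfolding ri_norm_def ri_fnorm_def by simp
qed

lemma assoc_norm_Hoelder:
  assumes "ri_norm \<rho>" and [measurable]: "\<phi> \<in> borel_measurable lebesgue" "\<psi> \<in> borel_measurable lebesgue"
    and "ri_fnorm \<rho> \<phi> < \<infinity>"
  shows "(\<integral>\<^sup>+x. ennreal (cmod (\<phi> x * \<psi> x)) \<partial>lebesgue) \<le> ri_fnorm \<rho> \<phi> * assoc_norm \<rho> \<psi>"
proof (cases "ri_fnorm \<rho> \<phi> = 0")
  case True
  then have "AE x in lebesgue. ennreal (cmod (\<phi> x * \<psi> x)) = 0"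
    using ri_fnorm_eq_0_iff[OF assms(1,2)] by (auto elim: AE_mp)
  then have "(\<integral>\<^sup>+x. ennreal (cmod (\<phi> x * \<psi> x)) \<partial>lebesgue) = 0"
    by (simp add: nn_integral_0_iff_AE)
  then show ?thesis
    by simp
next
  case False
  then obtain r where r: "ri_fnorm \<rho> \<phi> = ennreal r" "r > 0"
    using \<open>ri_fnorm \<rho> \<phi> < \<infinity>\<close> by (cases "ri_fnorm \<rho> \<phi>") (auto simp: not_less)
  define \<phi>' where "\<phi>' x = complex_of_real (1 / r) * \<phi> x" for x
  have [measurable]: "\<phi>' \<in> borel_measurable lebesgue"
    unfolding \<phi>'_def by measurable
  have "ri_fnorm \<rho> \<phi>' = 1"
    unfolding \<phi>'_def using r
    by (subst ri_fnorm_of_real_mult[OF assms(1,2)]) (simp_all add: ennreal_mult[symmetric])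
  then have "(\<integral>\<^sup>+x. ennreal (cmod (\<phi>' x * \<psi> x)) \<partial>lebesgue) \<le> assoc_norm \<rho> \<psi>"
    unfolding assoc_norm_def by (intro SUP_upper) simp
  then have "ennreal r * (\<integral>\<^sup>+x. ennreal (cmod (\<phi>' x * \<psi> x)) \<partial>lebesgue) \<le> ri_fnorm \<rho> \<phi> * assoc_norm \<rho> \<psi>"
    unfolding r by (rule mult_left_mono) simp
  also have "ennreal r * (\<integral>\<^sup>+x. ennreal (cmod (\<phi>' x * \<psi> x)) \<partial>lebesgue)
      = (\<integral>\<^sup>+x. ennreal (cmod (\<phi> x * \<psi> x)) \<partial>lebesgue)"
    using r by (subst nn_integral_cmult[symmetric])
      (auto simp: \<phi>'_def norm_mult norm_divide ennreal_mult[symmetric] intro!: nn_integral_cong)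
  finally show ?thesis .
qed

lemma norm_integral_mult_fourier_le:
  fixes Q :: "('a::euclidean_space \<Rightarrow> ennreal) \<Rightarrow> ennreal" and V :: "'a \<Rightarrow> real"
  assumes "ri_norm Q" and [measurable]: "V \<in> borel_measurable lebesgue" and V_pos: "\<And>x. V x > 0"
    and f: "integrable lebesgue f" and g: "integrable lebesgue g"
    and "(\<lambda>x. g x / complex_of_real (V x)) \<in> ri_space Q"
  shows "ennreal (cmod (\<integral>x. f x * fourier g x \<partial>lebesgue))
           \<le> ri_fnorm Q (\<lambda>x. g x / complex_of_real (V x)) * assoc_norm Q (\<lambda>x. complex_of_real (V x) * fourier f x)"
proof -
  have [measurable]: "f \<in> borel_measurable lebesgue" "g \<in> borel_measurable lebesgue"
    using f g by auto
  have "ennreal (cmod (\<integral>x. f x * fourier g x \<partial>lebesgue)) = ennreal (cmod (\<integral>t. g t * fourier f t \<partial>lebesgue))"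
    using fourier_multiplication_formula(2)[OF f g] by simp
  also have "\<dots> \<le> (\<integral>\<^sup>+t. ennreal (cmod (g t * fourier f t)) \<partial>lebesgue)"
    by (rule integral_norm_bound_ennreal[OF fourier_multiplication_formula(1)[OF g f]])
  also have "\<dots> = (\<integral>\<^sup>+t. ennreal (cmod (g t / complex_of_real (V t) * (complex_of_real (V t) * fourier f t))) \<partial>lebesgue)"
  proof -
    have "g t * fourier f t = g t / complex_of_real (V t) * (complex_of_real (V t) * fourier f t)" for t
      using V_pos[of t] by simp
    then show ?thesis
      by simp
  qed
  also have "\<dots> \<le> ri_fnorm Q (\<lambda>x. g x / complex_of_real (V x)) * assoc_norm Q (\<lambda>x. complex_of_real (V x) * fourier f x)"
    using assms(1,6) by (intro assoc_norm_Hoelder) (auto simp: ri_space_def)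
  finally show ?thesis .
qed

lemma nn_integral_eq_SUP_indicator:
  fixes f :: "'a \<Rightarrow> ennreal"
  assumes "incseq E" "(\<Union>k. E k) = space M" "\<And>k. E k \<in> sets M" "f \<in> borel_measurable M"
  shows "(\<integral>\<^sup>+x. f x \<partial>M) = (SUP k. \<integral>\<^sup>+x\<in>E k. f x \<partial>M)"
proof -
  have "(\<integral>\<^sup>+x. f x \<partial>M) = (\<integral>\<^sup>+x. (SUP k. f x * indicator (E k) x) \<partial>M)"
  proof (rule nn_integral_cong)
    fix x assume "x \<in> space M"
    then obtain k where "x \<in> E k"
      using assms(2) by auto
    then show "f x = (SUP k. f x * indicator (E k) x)"
      by (intro antisym SUP_upper2[of k] SUP_least) (auto split: split_indicator)
  qed
  also have "\<dots> = (SUP k. \<integral>\<^sup>+x. f x * indicator (E k) x \<partial>M)"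
    using assms by (intro nn_integral_monotone_convergence_SUP)
      (auto simp: incseq_def le_fun_def intro!: mult_left_mono split: split_indicator)
  finally show ?thesis .
qed

lemma set_nn_integral_eq_norm_integral_phase:
  fixes u :: "'a \<Rightarrow> real" and q :: "'a \<Rightarrow> complex"
  assumes "integrable M (\<lambda>x. u x * cmod (q x) * indicator E x)" and "\<And>x. u x \<ge> 0"
  shows "(\<integral>\<^sup>+x\<in>E. ennreal (u x * cmod (q x)) \<partial>M)
    = ennreal (cmod (\<integral>x. indicator E x * complex_of_real (u x) * cnj (sgn (q x)) * q x \<partial>M))"
proof -
  have phase: "indicator E x * complex_of_real (u x) * cnj (sgn (q x)) * q x
      = complex_of_real (u x * cmod (q x) * indicator E x)" for x
    by (simp add: mult.assoc cnj_sgn_mult split: split_indicator)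
  have "(\<integral>\<^sup>+x\<in>E. ennreal (u x * cmod (q x)) \<partial>M)
      = (\<integral>\<^sup>+x. ennreal (u x * cmod (q x) * indicator E x) \<partial>M)"
    by (auto intro!: nn_integral_cong split: split_indicator)
  also have "\<dots> = ennreal (\<integral>x. u x * cmod (q x) * indicator E x \<partial>M)"
    using assms by (intro nn_integral_eq_integral) auto
  also have "\<dots> = ennreal (cmod (\<integral>x. indicator E x * complex_of_real (u x) * cnj (sgn (q x)) * q x \<partial>M))"
    unfolding phase integral_complex_of_real norm_of_real
    using assms(2) by (simp add: integral_nonneg_AE)
  finally show ?thesis .
qed

lemma set_nn_integral_pairing_le:
  fixes \<rho> :: "('a::euclidean_space \<Rightarrow> ennreal) \<Rightarrow> ennreal" and U :: "'a \<Rightarrow> real"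
    and q h :: "'a \<Rightarrow> complex"
  assumes "ri_norm \<rho>"
    and [measurable]: "U \<in> borel_measurable lebesgue" "q \<in> borel_measurable lebesgue"
      "h \<in> borel_measurable lebesgue" "E \<in> sets lebesgue"
    and U_pos: "\<And>x. U x > 0" and h_norm: "ri_fnorm \<rho> h \<le> 1"
    and bound: "\<And>f. integrable lebesgue f \<Longrightarrow> ri_fnorm \<rho> (\<lambda>x. complex_of_real (U x) * f x) \<le> 1 \<Longrightarrow>
        ennreal (cmod (\<integral>x. f x * q x \<partial>lebesgue)) \<le> B"
    and E_finite: "emeasure lebesgue E < \<infinity>"
    and E_bounded: "\<And>x. x \<in> E \<Longrightarrow> cmod (h x) / U x \<le> c \<and> cmod (q x) \<le> c"
  shows "(\<integral>\<^sup>+x\<in>E. ennreal (cmod (h x) / U x * cmod (q x)) \<partial>lebesgue) \<le> B"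
proof -
  define f where "f x = indicator E x * complex_of_real (cmod (h x) / U x) * cnj (sgn (q x))" for x
  have [measurable]: "f \<in> borel_measurable lebesgue"
    unfolding f_def by measurable
  have f_le: "cmod (f x) \<le> cmod (h x) / U x" for x
    using U_pos[of x] by (auto simp: f_def norm_mult norm_divide norm_sgn split: split_indicator)
  have "integrable lebesgue f"
  proof (rule integrableI_bounded_set[OF _ _ E_finite, where B=c])
    show "AE x in lebesgue. x \<in> E \<longrightarrow> norm (f x) \<le> c"
      using f_le E_bounded order.trans by blast
  qed (auto simp: f_def)
  moreover have "ri_fnorm \<rho> (\<lambda>x. complex_of_real (U x) * f x) \<le> 1"
  proof -
    have Uf_le: "cmod (complex_of_real (U x) * f x) \<le> cmod (h x)" for x
      using f_le[of x] U_pos[of x] by (simp add: norm_mult pos_le_divide_eq mult.commute)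
    have "ri_fnorm \<rho> (\<lambda>x. complex_of_real (U x) * f x) \<le> ri_fnorm \<rho> h"
      by (rule ri_fnorm_mono[OF \<open>ri_norm \<rho>\<close> _ _ Uf_le]; measurable)
    with h_norm show ?thesis
      by simp
  qed
  ultimately have "ennreal (cmod (\<integral>x. f x * q x \<partial>lebesgue)) \<le> B"
    by (rule bound)
  moreover have "integrable lebesgue (\<lambda>x. cmod (h x) / U x * cmod (q x) * indicator E x)"
  proof (rule integrableI_bounded_set[OF _ _ E_finite, where B="c * c"])
    show "AE x in lebesgue. x \<in> E \<longrightarrow> norm (cmod (h x) / U x * cmod (q x) * indicator E x) \<le> c * c"
    proof (intro AE_I2 impI)
      fix x assume "x \<in> E"
      then have "cmod (h x) / U x * cmod (q x) \<le> c * c"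
        using E_bounded[of x] by (intro mult_mono) (auto intro: order.trans[OF norm_ge_zero])
      then show "norm (cmod (h x) / U x * cmod (q x) * indicator E x) \<le> c * c"
        using \<open>x \<in> E\<close> U_pos[of x] by simp
    qed
  qed auto
  ultimately show ?thesis
    using U_pos by (subst set_nn_integral_eq_norm_integral_phase) (simp_all add: f_def less_imp_le)
qed

lemma assoc_norm_divide_weight_leI:
  fixes \<rho> :: "('a::euclidean_space \<Rightarrow> ennreal) \<Rightarrow> ennreal" and U :: "'a \<Rightarrow> real"
    and q :: "'a \<Rightarrow> complex"
  assumes "ri_norm \<rho>" and [measurable]: "U \<in> borel_measurable lebesgue" "q \<in> borel_measurable lebesgue"
    and U_pos: "\<And>x. U x > 0"
    and bound: "\<And>f. integrable lebesgue f \<Longrightarrow> ri_fnorm \<rho> (\<lambda>x. complex_of_real (U x) * f x) \<le> 1 \<Longrightarrow>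
        ennreal (cmod (\<integral>x. f x * q x \<partial>lebesgue)) \<le> B"
  shows "assoc_norm \<rho> (\<lambda>x. q x / complex_of_real (U x)) \<le> B"
  unfolding assoc_norm_def
proof (rule SUP_least, clarify)
  fix h assume [measurable]: "h \<in> borel_measurable lebesgue" and h_norm: "ri_fnorm \<rho> h \<le> 1"
  define E where "E k = {x. norm x \<le> real k \<and> cmod (h x) / U x \<le> real k \<and> cmod (q x) \<le> real k}"
    for k :: nat
  have E_sets: "E k \<in> sets lebesgue" for k
  proof -
    have "{x \<in> space lebesgue. norm x \<le> real k \<and> cmod (h x) / U x \<le> real k \<and> cmod (q x) \<le> real k}
        \<in> sets lebesgue"
      by measurable
    then show ?thesis
      by (simp add: E_def)
  qed
  have "incseq E"
    by (intro monoI) (auto simp: E_def)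
  have "(\<Union>k. E k) = space lebesgue"
  proof (intro set_eqI iffI)
    fix x :: 'a
    obtain k :: nat where "max (norm x) (max (cmod (h x) / U x) (cmod (q x))) \<le> real k"
      using real_arch_simple by blast
    then show "x \<in> (\<Union>k. E k)"
      by (auto simp: E_def)
  qed simp
  have "(\<integral>\<^sup>+x\<in>E k. ennreal (cmod (h x) / U x * cmod (q x)) \<partial>lebesgue) \<le> B" for k
  proof (rule set_nn_integral_pairing_le[OF assms(1-3) _ E_sets U_pos h_norm bound])
    have "emeasure lebesgue (E k) \<le> emeasure lebesgue (cball (0::'a) (real k))"
      by (intro emeasure_mono) (auto simp: E_def)
    also have "\<dots> < \<infinity>"
      using emeasure_lborel_cball_finite[of "0::'a" "real k"] by (simp add: emeasure_completion)
    finally show "emeasure lebesgue (E k) < \<infinity>" .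
  qed (auto simp: E_def)
  then have "(\<integral>\<^sup>+x. ennreal (cmod (h x) / U x * cmod (q x)) \<partial>lebesgue) \<le> B"
    by (simp add: nn_integral_eq_SUP_indicator[OF \<open>incseq E\<close> _ E_sets] SUP_least \<open>(\<Union>k. E k) = space lebesgue\<close>)
  moreover have "cmod (h x * (q x / complex_of_real (U x))) = cmod (h x) / U x * cmod (q x)" for x
    using U_pos[of x] by (simp add: norm_mult norm_divide)
  ultimately show "(\<integral>\<^sup>+x. ennreal (cmod (h x * (q x / complex_of_real (U x)))) \<partial>lebesgue) \<le> B"
    by simp
qed

theorem lemma2p1:
  fixes P Q :: "('a::euclidean_space \<Rightarrow> ennreal) \<Rightarrow> ennreal"
    and U V :: "'a \<Rightarrow> real" and C :: real
  assumes "ri_norm P" and "ri_norm Q"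
    and "U \<in> borel_measurable lebesgue" and "V \<in> borel_measurable lebesgue"
    and "\<And>x. U x > 0" and "\<And>x. V x > 0"
    and "C > 0"
    and hyp: "\<And>f. integrable lebesgue f \<Longrightarrow> (\<lambda>x. complex_of_real (U x) * f x) \<in> ri_space P \<Longrightarrow>
         (\<lambda>x. complex_of_real (V x) * fourier f x) \<in> assoc_space Q \<and>
         assoc_norm Q (\<lambda>x. complex_of_real (V x) * fourier f x)
           \<le> ennreal C * ri_fnorm P (\<lambda>x. complex_of_real (U x) * f x)"
    and "integrable lebesgue g" and "(\<lambda>x. g x / complex_of_real (V x)) \<in> ri_space Q"
  shows "(\<lambda>x. fourier g x / complex_of_real (U x)) \<in> assoc_space P \<and>
         assoc_norm P (\<lambda>x. fourier g x / complex_of_real (U x))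
           \<le> ennreal C * ri_fnorm Q (\<lambda>x. g x / complex_of_real (V x))"
proof -
  note [measurable] = assms(3,4)
  have [measurable]: "g \<in> borel_measurable lebesgue"
    using \<open>integrable lebesgue g\<close> by auto
  define B where "B = ennreal C * ri_fnorm Q (\<lambda>x. g x / complex_of_real (V x))"
  have "assoc_norm P (\<lambda>x. fourier g x / complex_of_real (U x)) \<le> B"
  proof (rule assoc_norm_divide_weight_leI[OF \<open>ri_norm P\<close> assms(3) _ assms(5)])
    show "fourier g \<in> borel_measurable lebesgue"
      by measurable
    fix f assume f: "integrable lebesgue f"
      and Uf_norm: "ri_fnorm P (\<lambda>x. complex_of_real (U x) * f x) \<le> 1"
    have [measurable]: "f \<in> borel_measurable lebesgue"
      using f by auto
    have "ri_fnorm P (\<lambda>x. complex_of_real (U x) * f x) < \<infinity>"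
      using order.strict_trans1[OF Uf_norm ennreal_one_less_top] by simp
    then have "(\<lambda>x. complex_of_real (U x) * f x) \<in> ri_space P"
      by (simp add: ri_space_def) measurable
    then have "assoc_norm Q (\<lambda>x. complex_of_real (V x) * fourier f x)
        \<le> ennreal C * ri_fnorm P (\<lambda>x. complex_of_real (U x) * f x)"
      using hyp[OF f] by blast
    also have "\<dots> \<le> ennreal C"
      using mult_left_mono[OF Uf_norm, of "ennreal C"] by simp
    finally have "assoc_norm Q (\<lambda>x. complex_of_real (V x) * fourier f x) \<le> ennreal C" .
    then have "ri_fnorm Q (\<lambda>x. g x / complex_of_real (V x)) * assoc_norm Q (\<lambda>x. complex_of_real (V x) * fourier f x) \<le> B"
      unfolding B_def by (subst mult.commute) (rule mult_right_mono; simp)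
    with norm_integral_mult_fourier_le[OF \<open>ri_norm Q\<close> assms(4,6) f assms(9,10)]
    show "ennreal (cmod (\<integral>x. f x * fourier g x \<partial>lebesgue)) \<le> B"
      by (rule order.trans)
  qed
  moreover have "B < \<infinity>"
    using assms(10) by (simp add: B_def ri_space_def ennreal_mult_less_top)
  moreover have "(\<lambda>x. fourier g x / complex_of_real (U x)) \<in> borel_measurable lebesgue"
    by measurable
  ultimately show ?thesis
    unfolding assoc_space_def B_def by auto
qed

end
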